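(* Let $H$ be a connected, locally finite graph. Then $\beta(P_{2\infty}\,\Box\, H)=2$ if and only if $H$ is the trivial graph $K_1$.
   Context: $P_{2\infty}$ is the two-way infinite path, with vertex set $\mathbb Z$ and $i,j$ adjacent iff $|i-j|=1$. The cartesian product $G\Box H$ has vertex set $V(G)\times V(H)$, where $(a,v)$ is adjacent to $(b,w)$ iff either $a=b$ and $vw\in E(H)$, or $v=w$ and $ab\in E(G)$. $d$ denotes shortest-path distance. A vertex $x$ resolves $u,v$ if $d(u,x)\ne d(v,x)$; a set of vertices is a resolving set if every pair of distinct vertices is resolved by some vertex of it. The metric dimension $\beta$ is the minimum cardinality of a resolving set if a finite one exists, and $\infty$ otherwise. *)

theory Defs
  imports Main "HOL-Library.Extended_Nat"
begin

definition graph :: "'a set \<Rightarrow> ('a \<Rightarrow> 'a \<Rightarrow> bool) \<Rightarrow> bool" where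
  "graph V E \<longleftrightarrow> (\<forall>x y. E x y \<longrightarrow> x \<in> V \<and> y \<in> V) \<and> (\<forall>x y. E x y \<longrightarrow> E y x) \<and> (\<forall>x. \<not> E x x)"

definition connected_graph :: "'a set \<Rightarrow> ('a \<Rightarrow> 'a \<Rightarrow> bool) \<Rightarrow> bool" where
  "connected_graph V E \<longleftrightarrow> V \<noteq> {} \<and> (\<forall>u\<in>V. \<forall>v\<in>V. \<exists>n. (E ^^ n) u v)"

definition locally_finite :: "'a set \<Rightarrow> ('a \<Rightarrow> 'a \<Rightarrow> bool) \<Rightarrow> bool" where
  "locally_finite V E \<longleftrightarrow> (\<forall>v\<in>V. finite {w. E v w})"

definition gdist :: "('a \<Rightarrow> 'a \<Rightarrow> bool) \<Rightarrow> 'a \<Rightarrow> 'a \<Rightarrow> enat" where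
  "gdist E u v = (if \<exists>n. (E ^^ n) u v then enat (LEAST n. (E ^^ n) u v) else \<infinity>)"

definition resolving_set :: "'a set \<Rightarrow> ('a \<Rightarrow> 'a \<Rightarrow> bool) \<Rightarrow> 'a set \<Rightarrow> bool" where
  "resolving_set V E W \<longleftrightarrow> W \<subseteq> V \<and>
     (\<forall>u\<in>V. \<forall>v\<in>V. u \<noteq> v \<longrightarrow> (\<exists>x\<in>W. gdist E u x \<noteq> gdist E v x))"

definition metric_dim :: "'a set \<Rightarrow> ('a \<Rightarrow> 'a \<Rightarrow> bool) \<Rightarrow> enat" where
  "metric_dim V E = (INF W \<in> {W. finite W \<and> resolving_set V E W}. enat (card W))"

definition path_Z_adj :: "int \<Rightarrow> int \<Rightarrow> bool" where
  "path_Z_adj i j \<longleftrightarrow> \<bar>i - j\<bar> = 1"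

definition cart_prod_adj :: "('a \<Rightarrow> 'a \<Rightarrow> bool) \<Rightarrow> ('b \<Rightarrow> 'b \<Rightarrow> bool) \<Rightarrow> ('a \<times> 'b) \<Rightarrow> ('a \<times> 'b) \<Rightarrow> bool" where
  "cart_prod_adj EG EH p q \<longleftrightarrow>
     (fst p = fst q \<and> EH (snd p) (snd q)) \<or> (snd p = snd q \<and> EG (fst p) (fst q))"

end

theory Submission
  imports Defs
begin

(* The proof rests on an explicit distance formula: for every connected graph H,
     d((i,g),(j,h)) = |i - j| + d_H(g,h)
   in Z \<box> H, because every walk splits into steps along Z and steps along H.
   From it we read off:
   - if H = K_1, the cylinder is the path Z itself, no single vertex resolves it
     (its two neighbours are at equal distance), while {(0,x),(1,x)} does;
     hence the metric dimension is 2;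
   - if H has a second vertex, then for ANY two landmarks w1, w2 we exhibit two
     distinct vertices at equal distances from both, so no set of at most two
     vertices resolves and the metric dimension is at least 3.
   The file first proves two generic bounds on metric_dim, then the distance
   calculus in H and in Z \<box> H, then the two "unresolved pair" constructions,
   and finally the theorem. *)

section \<open>Generic bounds on the metric dimension\<close>

lemma metric_dim_le_card:
  assumes "finite W" and "resolving_set VV E W"
  shows "metric_dim VV E \<le> enat (card W)"
  unfolding metric_dim_def by (rule INF_lower) (use assms in simp)

lemma metric_dim_gt:
  assumes unresolved: "\<And>W. finite W \<Longrightarrow> W \<subseteq> VV \<Longrightarrow> card W \<le> k \<Longrightarrow>
      \<exists>u\<in>VV. \<exists>v\<in>VV. u \<noteq> v \<and> (\<forall>x\<in>W. gdist E u x = gdist E v x)"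
  shows "enat k < metric_dim VV E"
proof -
  have "enat (Suc k) \<le> metric_dim VV E"
    unfolding metric_dim_def
  proof (rule INF_greatest)
    fix W assume "W \<in> {W. finite W \<and> resolving_set VV E W}"
    then have fin: "finite W" and res: "resolving_set VV E W" by auto
    then have sub: "W \<subseteq> VV" unfolding resolving_set_def by blast
    have "\<not> card W \<le> k"
    proof
      assume "card W \<le> k"
      from unresolved[OF fin sub this] obtain u v where
        "u \<in> VV" "v \<in> VV" "u \<noteq> v" "\<forall>x\<in>W. gdist E u x = gdist E v x"
        by blast
      with res show False unfolding resolving_set_def by blast
    qed
    then show "enat (Suc k) \<le> enat (card W)" by simp
  qed
  then show ?thesis by (simp add: Suc_ile_eq)
qed


lemma card_le_2_subset_pair:
  assumes "finite W" "card W \<le> 2" "W \<subseteq> A" "A \<noteq> {}"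
  obtains w1 w2 where "w1 \<in> A" "w2 \<in> A" "W \<subseteq> {w1, w2}"
proof -
  have "card W = 0 \<or> card W = 1 \<or> card W = 2" using assms(2) by linarith
  then consider "W = {}" | w where "W = {w}" | w w' where "W = {w, w'}"
    using assms(1) by (auto simp: card_1_singleton_iff card_2_iff)
  then show ?thesis
    using assms(3,4) that by cases blast+
qed

section \<open>Walk distance in a graph\<close>

(* The length of a shortest walk; meaningful when some walk exists. *)
definition walk_dist :: "('a \<Rightarrow> 'a \<Rightarrow> bool) \<Rightarrow> 'a \<Rightarrow> 'a \<Rightarrow> nat" where
  "walk_dist E g h = (LEAST k. (E ^^ k) g h)"

lemma walk_dist_refl [simp]: "walk_dist E h h = 0"
  unfolding walk_dist_def by (rule Least_equality) auto

lemma walk_dist_adjacent: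
  assumes "E u h" "u \<noteq> h"
  shows "walk_dist E u h = 1"
  unfolding walk_dist_def
proof (rule Least_equality)
  show "(E ^^ 1) u h" using assms(1) by (simp only: relpowp_1)
next
  fix n assume "(E ^^ n) u h"
  then show "1 \<le> n" using assms(2) by (cases n) auto
qed

lemma walk_dist_first_step:
  assumes "(E ^^ n) g h" "g \<noteq> h"
  obtains u where "E g u" "walk_dist E u h + 1 = walk_dist E g h"
proof -
  define d where "d = walk_dist E g h"
  have walk: "(E ^^ d) g h" unfolding d_def walk_dist_def using assms(1) by (rule LeastI)
  with assms(2) obtain d' where d': "d = Suc d'" by (cases d) auto
  from walk d' obtain u where u: "E g u" "(E ^^ d') u h" by (metis relpowp_Suc_D2)
  have "walk_dist E u h \<le> d'" unfolding walk_dist_def using u(2) by (rule Least_le)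
  moreover have "(E ^^ walk_dist E u h) u h" unfolding walk_dist_def using u(2) by (rule LeastI)
  with u(1) have "(E ^^ Suc (walk_dist E u h)) g h" by (rule relpowp_Suc_I2)
  then have "d \<le> Suc (walk_dist E u h)" unfolding d_def walk_dist_def by (rule Least_le)
  ultimately show ?thesis using that u(1) d' d_def by simp
qed

lemma connected_graph_neighbour:
  assumes "graph V E" "connected_graph V E" "h \<in> V" "v \<in> V" "v \<noteq> h"
  obtains u where "u \<in> V" "u \<noteq> h" "walk_dist E u h = 1"
proof -
  from assms(2-4) obtain n where "(E ^^ n) h v" unfolding connected_graph_def by blast
  from walk_dist_first_step[OF this] assms(5) obtain u where "E h u" by metis
  with assms(1) have "u \<in> V" "E u h" "u \<noteq> h" unfolding graph_def by metis+
  then show ?thesis using that walk_dist_adjacent by metis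
qed

section \<open>Distances in the cylinder Z \<box> H\<close>

abbreviation cylinder_adj :: "('a \<Rightarrow> 'a \<Rightarrow> bool) \<Rightarrow> int \<times> 'a \<Rightarrow> int \<times> 'a \<Rightarrow> bool" where
  "cylinder_adj E \<equiv> cart_prod_adj path_Z_adj E"

lemma path_Z_walk: "(path_Z_adj ^^ nat \<bar>i - j\<bar>) i j"
proof (induction "nat \<bar>i - j\<bar>" arbitrary: j)
  case 0
  then show ?case by simp
next
  case (Suc n)
  define j' where "j' = (if j > i then j - 1 else j + 1)"
  have "n = nat \<bar>i - j'\<bar>" using Suc.hyps(2) unfolding j'_def by auto
  then have "(path_Z_adj ^^ n) i j'" by (simp add: Suc.hyps(1))
  moreover have "path_Z_adj j' j" unfolding j'_def path_Z_adj_def by auto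
  ultimately show ?case using Suc.hyps(2) by (metis relpowp_Suc_I)
qed

lemma lift_walk_Z:
  "(path_Z_adj ^^ n) i j \<Longrightarrow> (cylinder_adj E ^^ n) (i, g) (j, g)"
proof (induction n arbitrary: j)
  case (Suc n)
  from Suc.prems obtain y where "(path_Z_adj ^^ n) i y" "path_Z_adj y j" by (rule relpowp_Suc_E)
  with Suc.IH show ?case by (metis cart_prod_adj_def fst_conv relpowp_Suc_I snd_conv)
qed simp

lemma lift_walk_H:
  "(E ^^ n) g h \<Longrightarrow> (cylinder_adj E ^^ n) (i, g) (i, h)"
proof (induction n arbitrary: h)
  case (Suc n)
  from Suc.prems obtain y where "(E ^^ n) g y" "E y h" by (rule relpowp_Suc_E)
  with Suc.IH show ?case by (metis cart_prod_adj_def fst_conv relpowp_Suc_I snd_conv)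
qed simp

(* Projection: a walk of length n in the product contains a walk in H of length k
   with |i - j| + k \<le> n, since each step moves in only one coordinate. *)
lemma cylinder_walk_project:
  "(cylinder_adj E ^^ n) (i, g) (j, h) \<Longrightarrow> \<exists>k. (E ^^ k) g h \<and> nat \<bar>i - j\<bar> + k \<le> n"
proof (induction n arbitrary: j h)
  case 0
  then show ?case by (intro exI[of _ 0]) auto
next
  case (Suc n)
  from Suc.prems obtain y where
    walk: "(cylinder_adj E ^^ n) (i, g) y" and step: "cylinder_adj E y (j, h)"
    by (rule relpowp_Suc_E)
  obtain j' h' where y: "y = (j', h')" by (cases y)
  note walk = walk[unfolded y] and step = step[unfolded y]
  from Suc.IH[OF walk] obtain k where k: "(E ^^ k) g h'" "nat \<bar>i - j'\<bar> + k \<le> n" by blast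
  from step have "(j' = j \<and> E h' h) \<or> (h' = h \<and> \<bar>j' - j\<bar> = 1)"
    unfolding cart_prod_adj_def path_Z_adj_def by auto
  then show ?case
  proof
    assume "j' = j \<and> E h' h"
    with k show ?thesis by (intro exI[of _ "Suc k"]) (auto intro: relpowp_Suc_I)
  next
    assume "h' = h \<and> \<bar>j' - j\<bar> = 1"
    with k show ?thesis by (intro exI[of _ k]) auto
  qed
qed

lemma cylinder_dist:
  assumes "connected_graph V E" "g \<in> V" "h \<in> V"
  shows "gdist (cylinder_adj E) (i, g) (j, h) = enat (nat \<bar>i - j\<bar> + walk_dist E g h)"
proof -
  let ?d = "nat \<bar>i - j\<bar> + walk_dist E g h"
  from assms obtain k0 where "(E ^^ k0) g h" unfolding connected_graph_def by blast
  then have "(E ^^ walk_dist E g h) g h" unfolding walk_dist_def by (rule LeastI)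
  then have "(cylinder_adj E ^^ walk_dist E g h) (j, g) (j, h)" by (rule lift_walk_H)
  with lift_walk_Z[OF path_Z_walk]
  have walk: "(cylinder_adj E ^^ ?d) (i, g) (j, h)"
    unfolding relpowp_add by (rule relcomppI)
  have "(LEAST n. (cylinder_adj E ^^ n) (i, g) (j, h)) = ?d"
  proof (rule Least_equality)
    fix n assume "(cylinder_adj E ^^ n) (i, g) (j, h)"
    from cylinder_walk_project[OF this]
    obtain k where "(E ^^ k) g h" "nat \<bar>i - j\<bar> + k \<le> n" by blast
    moreover from \<open>(E ^^ k) g h\<close> have "walk_dist E g h \<le> k"
      unfolding walk_dist_def by (rule Least_le)
    ultimately show "?d \<le> n" by simp
  qed (rule walk)
  with walk show ?thesis unfolding gdist_def by auto
qed

section \<open>Pairs of vertices that two landmarks cannot distinguish\<close>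

(* Two landmarks in one Z-layer: the vertices one step above and one step below
   the first landmark along Z are equidistant from every vertex of that layer. *)
lemma unresolved_same_layer:
  assumes "connected_graph V E" "h1 \<in> V" "h2 \<in> V"
  shows "\<exists>u\<in>UNIV \<times> V. \<exists>v\<in>UNIV \<times> V. u \<noteq> v \<and>
    (\<forall>x\<in>{(a, h1), (a, h2)}. gdist (cylinder_adj E) u x = gdist (cylinder_adj E) v x)"
  using assms cylinder_dist[OF assms(1)]
  by (intro bexI[of _ "(a + 1, h1)"] bexI[of _ "(a - 1, h1)"]) auto

(* Landmarks (a1,h1), (a2,h2) with a1 < a2 and h1 \<noteq> h2: step from (a1,h1) either
   up along Z, or to a neighbour of h1 closer to h2 in H.  Both moves add 1 to the
   distance to (a1,h1) and leave the distance to (a2,h2) unchanged. *)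
lemma unresolved_distinct_layers:
  assumes "graph V E" "connected_graph V E" "h1 \<in> V" "h2 \<in> V" "h1 \<noteq> h2" "a1 < a2"
  shows "\<exists>u\<in>UNIV \<times> V. \<exists>v\<in>UNIV \<times> V. u \<noteq> v \<and>
    (\<forall>x\<in>{(a1, h1), (a2, h2)}. gdist (cylinder_adj E) u x = gdist (cylinder_adj E) v x)"
proof -
  from assms(2-4) obtain n where "(E ^^ n) h1 h2" unfolding connected_graph_def by blast
  from walk_dist_first_step[OF this assms(5)] obtain u
    where u: "E h1 u" and closer: "walk_dist E u h2 + 1 = walk_dist E h1 h2" .
  from u assms(1) have uV: "u \<in> V" and u_h1: "walk_dist E u h1 = 1"
    using walk_dist_adjacent unfolding graph_def by metis+
  show ?thesis
    using assms(3,4,6) uV u_h1 closer cylinder_dist[OF assms(2)]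
    by (intro bexI[of _ "(a1 + 1, h1)"] bexI[of _ "(a1, u)"]) auto
qed

(* Two landmarks in one H-fibre: go above both along Z, and compare with the
   vertex one step lower but one step off the fibre in H. *)
lemma unresolved_same_fibre:
  assumes "graph V E" "connected_graph V E" "h \<in> V" "h' \<in> V" "h' \<noteq> h"
  shows "\<exists>u\<in>UNIV \<times> V. \<exists>v\<in>UNIV \<times> V. u \<noteq> v \<and>
    (\<forall>x\<in>{(a1, h), (a2, h)}. gdist (cylinder_adj E) u x = gdist (cylinder_adj E) v x)"
proof -
  obtain u where uV: "u \<in> V" and "u \<noteq> h" and u_h: "walk_dist E u h = 1"
    using connected_graph_neighbour[OF assms] .
  define i where "i = max a1 a2 + 1"
  show ?thesis
    using assms(3) uV \<open>u \<noteq> h\<close> u_h cylinder_dist[OF assms(2)]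
    by (intro bexI[of _ "(i, h)"] bexI[of _ "(i - 1, u)"]) (auto simp: i_def)
qed

lemma unresolved_any_two:
  assumes "graph V E" "connected_graph V E" "\<nexists>x. V = {x}"
    and "(a1, h1) \<in> UNIV \<times> V" "(a2, h2) \<in> UNIV \<times> V"
  shows "\<exists>u\<in>UNIV \<times> V. \<exists>v\<in>UNIV \<times> V. u \<noteq> v \<and>
    (\<forall>x\<in>{(a1, h1), (a2, h2)}. gdist (cylinder_adj E) u x = gdist (cylinder_adj E) v x)"
proof -
  have h: "h1 \<in> V" "h2 \<in> V" using assms(4,5) by auto
  with assms(3) obtain v where v: "v \<in> V" "v \<noteq> h1" by blast
  consider "a1 = a2" | "h1 = h2" | "h1 \<noteq> h2" "a1 < a2" | "h1 \<noteq> h2" "a2 < a1" by linarith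
  then show ?thesis
  proof cases
    case 1
    then show ?thesis using unresolved_same_layer[OF assms(2) h] by simp
  next
    case 2
    then show ?thesis using unresolved_same_fibre[OF assms(1,2) h(1) v] by simp
  next
    case 3
    then show ?thesis using unresolved_distinct_layers[OF assms(1,2) h] by simp
  next
    case 4
    then show ?thesis
      using unresolved_distinct_layers[OF assms(1,2) h(2,1) _ 4(2)] by (simp add: insert_commute)
  qed
qed

lemma metric_dim_cylinder_nontrivial:
  assumes "graph V E" "connected_graph V E" "\<nexists>x. V = {x}"
  shows "2 < metric_dim ((UNIV :: int set) \<times> V) (cylinder_adj E)"
proof -
  let ?VV = "(UNIV :: int set) \<times> V"
  have "enat 2 < metric_dim ?VV (cylinder_adj E)"
  proof (rule metric_dim_gt)
    fix W assume W: "finite W" "W \<subseteq> ?VV" "card W \<le> 2"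
    have "?VV \<noteq> {}" using assms(2) unfolding connected_graph_def by auto
    with W obtain w1 w2 where "w1 \<in> ?VV" "w2 \<in> ?VV" "W \<subseteq> {w1, w2}"
      by (elim card_le_2_subset_pair)
    moreover from \<open>w1 \<in> ?VV\<close> \<open>w2 \<in> ?VV\<close> obtain u v where
      "u \<in> ?VV" "v \<in> ?VV" "u \<noteq> v"
      "\<forall>x\<in>{w1, w2}. gdist (cylinder_adj E) u x = gdist (cylinder_adj E) v x"
      using unresolved_any_two[OF assms] by (metis surj_pair)
    ultimately show "\<exists>u\<in>?VV. \<exists>v\<in>?VV. u \<noteq> v \<and>
        (\<forall>x\<in>W. gdist (cylinder_adj E) u x = gdist (cylinder_adj E) v x)"
      by blast
  qed
  then show ?thesis by (simp add: numeral_eq_enat)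
qed

lemma metric_dim_cylinder_trivial:
  assumes "connected_graph V E" "V = {x}"
  shows "metric_dim ((UNIV :: int set) \<times> V) (cylinder_adj E) = 2"
proof -
  let ?VV = "(UNIV :: int set) \<times> V" and ?W = "{(0 :: int, x), (1, x)}"
  have xV: "x \<in> V" using assms(2) by simp
  have dist: "gdist (cylinder_adj E) (k, x) (l, x) = enat (nat \<bar>k - l\<bar>)" for k l
    using cylinder_dist[OF assms(1) xV xV] by simp
  have "enat 1 < metric_dim ?VV (cylinder_adj E)"
  proof (rule metric_dim_gt)
    fix W assume W: "finite W" "W \<subseteq> ?VV" "card W \<le> 1"
    then have "W = {} \<or> (\<exists>w. W = {w})" by (auto simp: le_Suc_eq card_1_singleton_iff)
    then obtain a where "W \<subseteq> {(a, x)}" using W(2) assms(2) by blast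
    then show "\<exists>u\<in>?VV. \<exists>v\<in>?VV. u \<noteq> v \<and>
        (\<forall>y\<in>W. gdist (cylinder_adj E) u y = gdist (cylinder_adj E) v y)"
      using unresolved_same_layer[OF assms(1) xV xV, of a] by (simp only: insert_absorb2) blast
  qed
  moreover have "resolving_set ?VV (cylinder_adj E) ?W"
    unfolding resolving_set_def
  proof (intro conjI ballI impI)
    fix u v assume "u \<in> ?VV" "v \<in> ?VV" "u \<noteq> v"
    then obtain i j where ij: "u = (i, x)" "v = (j, x)" "i \<noteq> j" using assms(2) by auto
    then have "nat \<bar>i\<bar> \<noteq> nat \<bar>j\<bar> \<or> nat \<bar>i - 1\<bar> \<noteq> nat \<bar>j - 1\<bar>" by arith
    then show "\<exists>y\<in>?W. gdist (cylinder_adj E) u y \<noteq> gdist (cylinder_adj E) v y"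
      using ij dist by auto
  qed (use xV in auto)
  then have "metric_dim ?VV (cylinder_adj E) \<le> enat (card ?W)"
    by (intro metric_dim_le_card) simp
  then have "metric_dim ?VV (cylinder_adj E) \<le> 2" by (simp add: eval_nat_numeral numeral_eq_enat)
  ultimately show ?thesis
    by (cases "metric_dim ?VV (cylinder_adj E)") (auto simp: numeral_eq_enat one_enat_def)
qed

theorem lemma7:
  fixes V :: "'a set" and E :: "'a \<Rightarrow> 'a \<Rightarrow> bool"
  assumes "graph V E" and "connected_graph V E" and "locally_finite V E"
  shows "metric_dim ((UNIV :: int set) \<times> V) (cart_prod_adj path_Z_adj E) = 2
         \<longleftrightarrow> (\<exists>x. V = {x})"
proof
  assume "metric_dim ((UNIV :: int set) \<times> V) (cart_prod_adj path_Z_adj E) = 2"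
  then show "\<exists>x. V = {x}"
    using metric_dim_cylinder_nontrivial[OF assms(1,2)] by force
next
  assume "\<exists>x. V = {x}"
  then show "metric_dim ((UNIV :: int set) \<times> V) (cart_prod_adj path_Z_adj E) = 2"
    using metric_dim_cylinder_trivial[OF assms(2)] by blast
qed

end
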